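(* Let $(\mathbf Z_n,\mathbf A_{n\times n})$ be generated from the stochastic block model with parameters $(\pi,\rho_nS)$, with $n\rho_n\to\infty$; let $\alpha>0$, $0<\delta<s_{\min}/2$, and suppose $n\rho_n>\frac{4s_{\max}}{\alpha^2\delta^2}$. Then \[ \frac{o_{ab}(\mathbf e_n)}{\rho_n\,n_{ab}(\mathbf e_n)}\in(s_{\min}-\delta,\ s_{\max}+\delta) \] simultaneously for all $a,b\in[k]$ and all $\mathbf e_n\in[k]^n$ satisfying $n_a(\mathbf e_n)\ge\alpha n$ for all $a$, eventually almost surely as $n\to\infty$.
   Context: SBM with parameters $(\pi,\rho_nS)$: $k\ge2$ fixed; $\pi$ a probability vector on $[k]$ with all $\pi_a>0$; $S$ a fixed symmetric $k\times k$ matrix with strictly positive entries and no two identical columns, $s_{\min},s_{\max}$ its minimal and maximal entries; $\rho_n\to0$. $\mathbf Z_n$ i.i.d. with law $\pi$; given $\mathbf Z_n=\mathbf z_n$, $\mathbf A_{n\times n}$ symmetric, zero diagonal, $A_{ij}$ ($i<j$) independent Bernoulli$(\rho_nS_{z_iz_j})$. For $\mathbf e_n\in[k]^n$: $n_a(\mathbf e_n)=\#\{i:e_i=a\}$; $n_{ab}=n_an_b$ ($a\ne b$), $n_{aa}=n_a(n_a-1)$; $o_{ab}(\mathbf e_n)=\sum_{i,j}\mathbf 1\{e_i=a,e_j=b\}A_{ij}$. *)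

theory Defs
  imports "HOL-Probability.Probability"
begin

text \<open>Stochastic block model on nodes 0..<n with communities 0..<k.
  The community law pi is a pmf p on nat with support exactly 0..<k (so p a = pi_a > 0). Outside the index range the labels default to 0 and A to False.\<close>

definition sbm_pmf :: "nat \<Rightarrow> nat pmf \<Rightarrow> real \<Rightarrow> (nat \<Rightarrow> nat \<Rightarrow> real)
    \<Rightarrow> ((nat \<Rightarrow> nat) \<times> (nat \<Rightarrow> nat \<Rightarrow> bool)) pmf" where
  "sbm_pmf n p r S =
     Pi_pmf {..<n} 0 (\<lambda>_. p) \<bind> (\<lambda>z.
     Pi_pmf {(i, j). i < j \<and> j < n} False (\<lambda>(i, j). bernoulli_pmf (r * S (z i) (z j))) \<bind> (\<lambda>U.
     return_pmf (z, \<lambda>i j. if i < j then U (i, j) else if j < i then U (j, i) else False)))"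

definition n_cnt :: "nat \<Rightarrow> (nat \<Rightarrow> nat) \<Rightarrow> nat \<Rightarrow> nat" where
  "n_cnt n e a = card {i. i < n \<and> e i = a}"

definition n_pair :: "nat \<Rightarrow> (nat \<Rightarrow> nat) \<Rightarrow> nat \<Rightarrow> nat \<Rightarrow> nat" where
  "n_pair n e a b = (if a \<noteq> b then n_cnt n e a * n_cnt n e b
                     else n_cnt n e a * (n_cnt n e a - 1))"

definition o_cnt :: "nat \<Rightarrow> (nat \<Rightarrow> nat \<Rightarrow> bool) \<Rightarrow> (nat \<Rightarrow> nat) \<Rightarrow> nat \<Rightarrow> nat \<Rightarrow> nat" where
  "o_cnt n A e a b = card {(i, j). i < n \<and> j < n \<and> e i = a \<and> e j = b \<and> A i j}"

definition s_min :: "nat \<Rightarrow> (nat \<Rightarrow> nat \<Rightarrow> real) \<Rightarrow> real" where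
  "s_min k S = Min {S a b | a b. a < k \<and> b < k}"

definition s_max :: "nat \<Rightarrow> (nat \<Rightarrow> nat \<Rightarrow> real) \<Rightarrow> real" where
  "s_max k S = Max {S a b | a b. a < k \<and> b < k}"

end

theory Submission
  imports Defs
begin

text \<open>Condition on the community labels. For a fixed labelling e and blocks a, b the count
  o_ab is then a sum, with weights in {0, 1, 2}, of independent edge indicators A_ij (i < j),
  and its mean lies between \<rho> n_ab s_min and \<rho> n_ab s_max. A Chernoff bound with tilt of
  order \<delta> / s_max shows that o_ab / (\<rho> n_ab) leaves (s_min - \<delta>, s_max + \<delta>) with probability
  at most 2 exp (- c \<rho> n_ab). For labellings with all n_a \<ge> \<alpha> n we have n_ab \<ge> (\<alpha> n)^2 / 2, so
  once n \<rho> is large this is at most 2 exp (- n (ln k + 1)), which survives the union bound over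
  the k^n k^2 choices of (e, a, b) as 2 k^2 e^-n. These bounds are summable in n, and
  Borel-Cantelli gives the almost sure eventual statement.\<close>

section \<open>Chernoff bounds for weighted sums of independent Bernoulli variables\<close>

lemma exp_le_quadratic:
  fixes u :: real
  assumes "\<bar>u\<bar> \<le> 1"
  shows "exp u \<le> 1 + u + u\<^sup>2"
proof (cases "u \<ge> 0")
  case True
  then show ?thesis using exp_bound assms by auto
next
  case False
  then have "exp u * (1 - u) \<le> 1"
    using exp_ge_add_one_self[of "- u"] by (simp add: exp_minus field_simps)
  moreover have "1 \<le> (1 + u + u\<^sup>2) * (1 - u)"
    using mult_nonpos_nonneg[of u "u * u"] False by (simp add: algebra_simps power2_eq_square)
  ultimately have "exp u * (1 - u) \<le> (1 + u + u\<^sup>2) * (1 - u)"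
    by linarith
  then show ?thesis
    using False by (simp add: mult_le_cancel_right)
qed

lemma exp_mult_minus_one_le:
  fixes t w :: real
  assumes "0 \<le> w" "w \<le> 2" "\<bar>t\<bar> \<le> 1/2"
  shows "exp (t * w) - 1 \<le> w * (t + 2 * t\<^sup>2)"
proof -
  have "\<bar>t\<bar> * w \<le> 1/2 * 2"
    using assms by (intro mult_mono) auto
  then have "exp (t * w) - 1 \<le> t * w + (t * w)\<^sup>2"
    using exp_le_quadratic[of "t * w"] assms by (simp add: abs_mult)
  also have "(t * w)\<^sup>2 = w * (w * t\<^sup>2)"
    by (simp add: power2_eq_square)
  also have "\<dots> \<le> w * (2 * t\<^sup>2)"
    using assms by (intro mult_left_mono mult_right_mono) auto
  finally show ?thesis
    by (simp add: algebra_simps)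
qed

lemma Pi_pmf_bernoulli_weighted_sum_tail:
  fixes P :: "'a set" and q w :: "'a \<Rightarrow> real" and s t :: real
  assumes fin: "finite P" and q: "\<And>x. x \<in> P \<Longrightarrow> 0 \<le> q x \<and> q x \<le> 1"
  shows "measure (Pi_pmf P dflt (\<lambda>x. bernoulli_pmf (q x)))
           {U. s \<le> t * (\<Sum>x\<in>P. w x * of_bool (U x))}
         \<le> exp (- s + (\<Sum>x\<in>P. q x * (exp (t * w x) - 1)))"
proof -
  let ?M = "Pi_pmf P dflt (\<lambda>x. bernoulli_pmf (q x))"
  let ?Y = "\<lambda>U. \<Sum>x\<in>P. w x * of_bool (U x)"
  let ?B = "{U. s \<le> t * ?Y U}"
  have fin_M: "finite (set_pmf ?M)"
    using fin by (simp add: set_Pi_pmf finite_PiE_dflt)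
  have exp_Y: "exp (t * ?Y U - s) = exp (- s) * (\<Prod>x\<in>P. exp (t * w x * of_bool (U x)))" for U
  proof -
    have "t * ?Y U - s = - s + (\<Sum>x\<in>P. t * w x * of_bool (U x))"
      by (simp add: sum_distrib_left mult.assoc)
    then show ?thesis
      by (simp only: exp_add exp_sum[OF fin])
  qed
  have mgf: "measure_pmf.expectation ?M (\<lambda>U. \<Prod>x\<in>P. exp (t * w x * of_bool (U x)))
      = (\<Prod>x\<in>P. 1 + q x * (exp (t * w x) - 1))"
  proof -
    have "measure_pmf.expectation ?M (\<lambda>U. \<Prod>x\<in>P. exp (t * w x * of_bool (U x)))
        = (\<Prod>x\<in>P. measure_pmf.expectation (bernoulli_pmf (q x)) (\<lambda>v. exp (t * w x * of_bool v)))"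
      by (rule expectation_prod_Pi_pmf[OF fin]) (auto intro: integrable_measure_pmf_finite)
    also have "\<dots> = (\<Prod>x\<in>P. 1 + q x * (exp (t * w x) - 1))"
      using q by (intro prod.cong) (auto simp: algebra_simps)
    finally show ?thesis .
  qed
  have "measure ?M ?B = measure_pmf.expectation ?M (indicator ?B)"
    by simp
  also have "\<dots> \<le> measure_pmf.expectation ?M (\<lambda>U. exp (t * ?Y U - s))"
    by (intro integral_mono integrable_measure_pmf_finite[OF fin_M])
       (auto simp: indicator_def)
  also have "\<dots> = exp (- s) * (\<Prod>x\<in>P. 1 + q x * (exp (t * w x) - 1))"
    unfolding exp_Y mgf[symmetric] by simp
  also have "\<dots> \<le> exp (- s) * (\<Prod>x\<in>P. exp (q x * (exp (t * w x) - 1)))"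
  proof (intro mult_left_mono prod_mono conjI)
    fix x assume "x \<in> P"
    then have "q x \<ge> 0" "q x \<le> 1"
      using q by auto
    then have "- q x \<le> q x * (exp (t * w x) - 1)"
      using mult_left_mono[of "- 1" "exp (t * w x) - 1" "q x"] by simp
    with \<open>q x \<le> 1\<close> show "0 \<le> 1 + q x * (exp (t * w x) - 1)"
      by linarith
  qed (simp_all add: add.commute exp_ge_add_one_self)
  also have "\<dots> = exp (- s + (\<Sum>x\<in>P. q x * (exp (t * w x) - 1)))"
    by (simp only: exp_add exp_sum[OF fin])
  finally show ?thesis .
qed

text \<open>The sign of t selects the tail: t > 0 gives the upper, t < 0 the lower one.\<close>

lemma Pi_pmf_bernoulli_weighted_sum_one_sided:
  fixes P :: "'a set" and q w :: "'a \<Rightarrow> real" and t D :: real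
  assumes fin: "finite P" and q: "\<And>x. x \<in> P \<Longrightarrow> 0 \<le> q x \<and> q x \<le> 1"
    and w: "\<And>x. x \<in> P \<Longrightarrow> 0 \<le> w x \<and> w x \<le> 2" and t: "\<bar>t\<bar> \<le> 1/2"
  defines "\<mu> \<equiv> \<Sum>x\<in>P. q x * w x"
  shows "measure (Pi_pmf P dflt (\<lambda>x. bernoulli_pmf (q x)))
           {U. t * \<mu> + \<bar>t\<bar> * D \<le> t * (\<Sum>x\<in>P. w x * of_bool (U x))}
         \<le> exp (- \<bar>t\<bar> * D + 2 * t\<^sup>2 * \<mu>)"
proof -
  have "(\<Sum>x\<in>P. q x * (exp (t * w x) - 1)) \<le> (\<Sum>x\<in>P. q x * (w x * (t + 2 * t\<^sup>2)))"
    using q w t by (intro sum_mono mult_left_mono exp_mult_minus_one_le) auto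
  also have "\<dots> = (t + 2 * t\<^sup>2) * \<mu>"
    unfolding \<mu>_def sum_distrib_left by (simp add: mult_ac)
  finally have "- (t * \<mu> + \<bar>t\<bar> * D) + (\<Sum>x\<in>P. q x * (exp (t * w x) - 1))
                \<le> - \<bar>t\<bar> * D + 2 * t\<^sup>2 * \<mu>"
    by (simp add: algebra_simps)
  then have "exp (- (t * \<mu> + \<bar>t\<bar> * D) + (\<Sum>x\<in>P. q x * (exp (t * w x) - 1)))
             \<le> exp (- \<bar>t\<bar> * D + 2 * t\<^sup>2 * \<mu>)"
    by (simp only: exp_le_cancel_iff)
  moreover have "measure (Pi_pmf P dflt (\<lambda>x. bernoulli_pmf (q x)))
           {U. t * \<mu> + \<bar>t\<bar> * D \<le> t * (\<Sum>x\<in>P. w x * of_bool (U x))}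
      \<le> exp (- (t * \<mu> + \<bar>t\<bar> * D) + (\<Sum>x\<in>P. q x * (exp (t * w x) - 1)))"
    by (rule Pi_pmf_bernoulli_weighted_sum_tail[OF fin q])
  ultimately show ?thesis
    by linarith
qed

lemma Pi_pmf_bernoulli_weighted_sum_deviation:
  fixes P :: "'a set" and q w :: "'a \<Rightarrow> real" and t D :: real
  assumes fin: "finite P" and q: "\<And>x. x \<in> P \<Longrightarrow> 0 \<le> q x \<and> q x \<le> 1"
    and w: "\<And>x. x \<in> P \<Longrightarrow> 0 \<le> w x \<and> w x \<le> 2" and t: "0 < t" "t \<le> 1/2"
  defines "\<mu> \<equiv> \<Sum>x\<in>P. q x * w x"
  shows "measure (Pi_pmf P dflt (\<lambda>x. bernoulli_pmf (q x)))
           {U. D \<le> \<bar>(\<Sum>x\<in>P. w x * of_bool (U x)) - \<mu>\<bar>}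
         \<le> 2 * exp (- t * D + 2 * t\<^sup>2 * \<mu>)"
proof -
  let ?M = "Pi_pmf P dflt (\<lambda>x. bernoulli_pmf (q x))"
  let ?Y = "\<lambda>U. \<Sum>x\<in>P. w x * of_bool (U x)"
  let ?tail = "\<lambda>t. {U. t * \<mu> + \<bar>t\<bar> * D \<le> t * ?Y U}"
  have "{U. D \<le> \<bar>?Y U - \<mu>\<bar>} \<subseteq> ?tail t \<union> ?tail (- t)"
  proof
    fix U assume "U \<in> {U. D \<le> \<bar>?Y U - \<mu>\<bar>}"
    then have "\<mu> + D \<le> ?Y U \<or> ?Y U \<le> \<mu> - D"
      by auto
    then have "t * (\<mu> + D) \<le> t * ?Y U \<or> t * ?Y U \<le> t * (\<mu> - D)"
      using t by (auto intro: mult_left_mono)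
    then show "U \<in> ?tail t \<union> ?tail (- t)"
      using t by (auto simp: algebra_simps)
  qed
  then have "measure ?M {U. D \<le> \<bar>?Y U - \<mu>\<bar>} \<le> measure ?M (?tail t \<union> ?tail (- t))"
    by (rule measure_pmf.finite_measure_mono) simp
  also have "\<dots> \<le> measure ?M (?tail t) + measure ?M (?tail (- t))"
    by (rule measure_Un_le) simp_all
  also have "\<dots> \<le> exp (- t * D + 2 * t\<^sup>2 * \<mu>) + exp (- t * D + 2 * t\<^sup>2 * \<mu>)"
    using Pi_pmf_bernoulli_weighted_sum_one_sided[where q = q and w = w and dflt = dflt and D = D,
            OF fin q w, of t]
          Pi_pmf_bernoulli_weighted_sum_one_sided[where q = q and w = w and dflt = dflt and D = D,
            OF fin q w, of "- t"] t
    by (intro add_mono) (simp_all add: \<mu>_def)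
  finally show ?thesis
    by simp
qed

section \<open>Block edge counts as weighted sums of edge indicators\<close>

definition upper_pairs :: "nat \<Rightarrow> (nat \<times> nat) set" where
  "upper_pairs n = {(i, j). i < j \<and> j < n}"

definition sym_adj :: "(nat \<times> nat \<Rightarrow> bool) \<Rightarrow> nat \<Rightarrow> nat \<Rightarrow> bool" where
  "sym_adj U = (\<lambda>i j. if i < j then U (i, j) else if j < i then U (j, i) else False)"

text \<open>An unordered pair i < j is counted in o_ab once for each of its orientations (i, j), (j, i)
  that lies in block (a, b).\<close>

definition block_weight :: "(nat \<Rightarrow> nat) \<Rightarrow> nat \<Rightarrow> nat \<Rightarrow> nat \<times> nat \<Rightarrow> real" where
  "block_weight e a b = (\<lambda>(i, j). of_bool (e i = a \<and> e j = b) + of_bool (e i = b \<and> e j = a))"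

lemma finite_upper_pairs [simp]: "finite (upper_pairs n)"
  by (rule finite_subset[of _ "{..<n} \<times> {..<n}"]) (auto simp: upper_pairs_def)

lemma block_weight_bounds: "0 \<le> block_weight e a b x \<and> block_weight e a b x \<le> 2"
  by (cases x) (simp add: block_weight_def)

lemma card_off_diagonal_eq_sum_upper_pairs:
  assumes R: "R \<subseteq> {(i, j). i < n \<and> j < n \<and> i \<noteq> j}"
  shows "real (card R) = (\<Sum>(i, j)\<in>upper_pairs n. of_bool ((i, j) \<in> R) + of_bool ((j, i) \<in> R))"
proof -
  let ?upper = "{x \<in> upper_pairs n. x \<in> R}" and ?lower = "{x \<in> upper_pairs n. prod.swap x \<in> R}"
  have R_split: "?upper \<union> prod.swap ` ?lower = R"
    using R by (auto simp: upper_pairs_def image_iff nat_neq_iff)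
  have fin: "finite ?upper" "finite (prod.swap ` ?lower)"
    by simp_all
  have "card (?upper \<union> prod.swap ` ?lower) = card ?upper + card (prod.swap ` ?lower)"
    by (rule card_Un_disjoint[OF fin]) (auto simp: upper_pairs_def)
  moreover have "card (prod.swap ` ?lower) = card ?lower"
    by (rule card_image) (simp add: inj_on_def)
  ultimately have "card R = card ?upper + card ?lower"
    by (simp only: R_split)
  then show ?thesis
    by (simp add: sum.distrib split_def Int_def prod.swap_def)
qed

lemma o_cnt_sym_adj:
  "real (o_cnt n (sym_adj U) e a b) = (\<Sum>x\<in>upper_pairs n. block_weight e a b x * of_bool (U x))"
proof -
  let ?R = "{(i, j). i < n \<and> j < n \<and> e i = a \<and> e j = b \<and> sym_adj U i j}"
  have "?R \<subseteq> {(i, j). i < n \<and> j < n \<and> i \<noteq> j}"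
    by (auto simp: sym_adj_def)
  then have "real (card ?R) = (\<Sum>(i, j)\<in>upper_pairs n. of_bool ((i, j) \<in> ?R) + of_bool ((j, i) \<in> ?R))"
    by (rule card_off_diagonal_eq_sum_upper_pairs)
  also have "\<dots> = (\<Sum>x\<in>upper_pairs n. block_weight e a b x * of_bool (U x))"
    by (intro sum.cong refl) (auto simp: upper_pairs_def sym_adj_def block_weight_def)
  finally show ?thesis
    by (simp add: o_cnt_def)
qed

lemma n_pair_eq_card: "n_pair n e a b = card {(i, j). i < n \<and> j < n \<and> i \<noteq> j \<and> e i = a \<and> e j = b}"
proof -
  let ?C = "\<lambda>a. {i. i < n \<and> e i = a}"
  show ?thesis
  proof (cases "a = b")
    case False
    then have "{(i, j). i < n \<and> j < n \<and> i \<noteq> j \<and> e i = a \<and> e j = b} = ?C a \<times> ?C b"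
      by auto
    then show ?thesis
      using False by (simp add: n_pair_def n_cnt_def card_cartesian_product)
  next
    case True
    then have "{(i, j). i < n \<and> j < n \<and> i \<noteq> j \<and> e i = a \<and> e j = b} = ?C a \<times> ?C a - (\<lambda>i. (i, i)) ` ?C a"
      by auto
    moreover have "card ((\<lambda>i. (i, i)) ` ?C a) = card (?C a)"
      by (rule card_image) (auto simp: inj_on_def)
    ultimately show ?thesis
      using True by (simp add: n_pair_def n_cnt_def card_Diff_subset card_cartesian_product
                               image_subset_iff diff_mult_distrib2)
  qed
qed

lemma n_pair_eq_sum_block_weight:
  "real (n_pair n e a b) = (\<Sum>x\<in>upper_pairs n. block_weight e a b x)"
proof -
  let ?R = "{(i, j). i < n \<and> j < n \<and> i \<noteq> j \<and> e i = a \<and> e j = b}"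
  have "real (card ?R) = (\<Sum>(i, j)\<in>upper_pairs n. of_bool ((i, j) \<in> ?R) + of_bool ((j, i) \<in> ?R))"
    by (rule card_off_diagonal_eq_sum_upper_pairs) auto
  also have "\<dots> = (\<Sum>x\<in>upper_pairs n. block_weight e a b x)"
    by (intro sum.cong refl) (auto simp: upper_pairs_def block_weight_def)
  finally show ?thesis
    by (simp add: n_pair_eq_card)
qed

lemma sbm_pmf_conv_bind:
  "sbm_pmf n p r S = Pi_pmf {..<n} 0 (\<lambda>_. p) \<bind> (\<lambda>z.
     map_pmf (\<lambda>U. (z, sym_adj U))
       (Pi_pmf (upper_pairs n) False (\<lambda>x. bernoulli_pmf (r * S (z (fst x)) (z (snd x))))))"
  unfolding sbm_pmf_def map_pmf_def sym_adj_def upper_pairs_def by (simp add: split_def)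

lemma measure_sbm_pmf_le:
  assumes "\<And>z. (\<And>i. i < n \<Longrightarrow> z i \<in> set_pmf p) \<Longrightarrow>
      measure (Pi_pmf (upper_pairs n) False (\<lambda>x. bernoulli_pmf (r * S (z (fst x)) (z (snd x)))))
        {U. (z, sym_adj U) \<in> B} \<le> c"
  shows "measure (sbm_pmf n p r S) B \<le> c"
proof -
  let ?Z = "Pi_pmf {..<n} 0 (\<lambda>_. p)"
  let ?F = "\<lambda>z. map_pmf (\<lambda>U. (z, sym_adj U))
              (Pi_pmf (upper_pairs n) False (\<lambda>x. bernoulli_pmf (r * S (z (fst x)) (z (snd x)))))"
  have bound: "measure (?F z) B \<le> c" if "z \<in> set_pmf ?Z" for z
    using assms[of z] that by (auto simp: set_Pi_pmf PiE_dflt_def vimage_def)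
  obtain z0 where "z0 \<in> set_pmf ?Z"
    using set_pmf_not_empty[of ?Z] by auto
  then have "0 \<le> c"
    using bound measure_nonneg order_trans by blast
  have "emeasure (sbm_pmf n p r S) B = (\<integral>\<^sup>+z. emeasure (?F z) B \<partial>?Z)"
    unfolding sbm_pmf_conv_bind by simp
  also have "\<dots> \<le> (\<integral>\<^sup>+z. ennreal c \<partial>?Z)"
    using bound by (intro nn_integral_mono_AE AE_pmfI) (auto simp: measure_pmf.emeasure_eq_measure intro!: ennreal_leI)
  also have "\<dots> = ennreal c"
    by simp
  finally show ?thesis
    using \<open>0 \<le> c\<close> by (simp add: measure_pmf.emeasure_eq_measure)
qed

section \<open>Deviation of a single scaled block density\<close>

definition scaled_density ::
    "nat \<Rightarrow> real \<Rightarrow> (nat \<Rightarrow> nat \<Rightarrow> bool) \<Rightarrow> (nat \<Rightarrow> nat) \<Rightarrow> nat \<Rightarrow> nat \<Rightarrow> real" where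
  "scaled_density n r A e a b = real (o_cnt n A e a b) / (r * real (n_pair n e a b))"

lemma deviation_of_ratio_outside:
  fixes Y \<mu> c lo hi \<delta> :: real
  assumes c: "c > 0" and \<mu>: "c * lo \<le> \<mu>" "\<mu> \<le> c * hi"
    and outside: "\<not> (lo - \<delta> < Y / c \<and> Y / c < hi + \<delta>)"
  shows "c * \<delta> \<le> \<bar>Y - \<mu>\<bar>"
proof -
  from outside have "Y \<le> c * (lo - \<delta>) \<or> c * (hi + \<delta>) \<le> Y"
    using c by (auto simp: not_less divide_le_eq le_divide_eq mult.commute)
  then show ?thesis
    using \<mu> by (auto simp: algebra_simps)
qed

lemma sum_weighted_between:
  fixes f w :: "'a \<Rightarrow> real"
  assumes "\<And>x. x \<in> A \<Longrightarrow> lo \<le> f x \<and> f x \<le> hi" and "\<And>x. x \<in> A \<Longrightarrow> 0 \<le> w x"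
  shows "lo * sum w A \<le> (\<Sum>x\<in>A. f x * w x) \<and> (\<Sum>x\<in>A. f x * w x) \<le> hi * sum w A"
  using assms by (auto simp: sum_distrib_left intro!: sum_mono mult_right_mono)

lemma edges_scaled_density_deviation:
  fixes r smin smax \<delta> t :: real and z :: "nat \<Rightarrow> nat"
  assumes S: "\<And>i j. i < n \<Longrightarrow> j < n \<Longrightarrow> smin \<le> S (z i) (z j) \<and> S (z i) (z j) \<le> smax"
    and r: "0 < r" "r * smax \<le> 1" and smin: "0 \<le> smin"
    and N: "0 < n_pair n e a b"
    and t: "0 < t" "t \<le> 1/2" "4 * t * smax \<le> \<delta>"
  shows "measure (Pi_pmf (upper_pairs n) False (\<lambda>x. bernoulli_pmf (r * S (z (fst x)) (z (snd x)))))
           {U. \<not> (smin - \<delta> < scaled_density n r (sym_adj U) e a b \<and>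
                   scaled_density n r (sym_adj U) e a b < smax + \<delta>)}
         \<le> 2 * exp (- (t * \<delta> * r * real (n_pair n e a b)) / 2)"
proof -
  define N where "N = real (n_pair n e a b)"
  define q where "q x = r * S (z (fst x)) (z (snd x))" for x
  define w where "w = block_weight e a b"
  define \<mu> where "\<mu> = (\<Sum>x\<in>upper_pairs n. q x * w x)"
  have q: "r * smin \<le> q x \<and> q x \<le> r * smax" if "x \<in> upper_pairs n" for x
    using S that r by (auto simp: q_def upper_pairs_def)
  have q01: "0 \<le> q x \<and> q x \<le> 1" if "x \<in> upper_pairs n" for x
    using q[OF that] r smin by (smt (verit) mult_nonneg_nonneg)
  have w: "0 \<le> w x \<and> w x \<le> 2" for x
    by (simp add: w_def block_weight_bounds)
  have "r * smin * N \<le> \<mu> \<and> \<mu> \<le> r * smax * N"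
    unfolding \<mu>_def N_def n_pair_eq_sum_block_weight w_def[symmetric]
    using q w by (intro sum_weighted_between) auto
  then have \<mu>: "r * N * smin \<le> \<mu>" "\<mu> \<le> r * N * smax"
    by (simp_all add: mult_ac)
  have rN: "0 < r * N"
    using r N by (simp add: N_def)
  have "r * N * \<delta> \<le> \<bar>(\<Sum>x\<in>upper_pairs n. w x * of_bool (U x)) - \<mu>\<bar>"
    if "\<not> (smin - \<delta> < scaled_density n r (sym_adj U) e a b \<and>
            scaled_density n r (sym_adj U) e a b < smax + \<delta>)" for U
    using deviation_of_ratio_outside[OF rN \<mu>]
          that[unfolded scaled_density_def o_cnt_sym_adj, folded N_def w_def]
    by (simp add: mult.commute)
  then have "measure (Pi_pmf (upper_pairs n) False (\<lambda>x. bernoulli_pmf (q x)))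
      {U. \<not> (smin - \<delta> < scaled_density n r (sym_adj U) e a b \<and>
              scaled_density n r (sym_adj U) e a b < smax + \<delta>)}
      \<le> measure (Pi_pmf (upper_pairs n) False (\<lambda>x. bernoulli_pmf (q x)))
      {U. r * N * \<delta> \<le> \<bar>(\<Sum>x\<in>upper_pairs n. w x * of_bool (U x)) - \<mu>\<bar>}"
    by (intro measure_pmf.finite_measure_mono) auto
  also have "\<dots> \<le> 2 * exp (- t * (r * N * \<delta>) + 2 * t\<^sup>2 * \<mu>)"
    unfolding \<mu>_def
    by (rule Pi_pmf_bernoulli_weighted_sum_deviation[where q = q and w = w,
                OF finite_upper_pairs q01 w t(1,2)])
  also have "\<dots> \<le> 2 * exp (- (t * \<delta> * r * N) / 2)"
  proof -
    have "2 * t\<^sup>2 * \<mu> \<le> 2 * t\<^sup>2 * (r * N * smax)"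
      using \<mu> by (intro mult_left_mono) auto
    also have "\<dots> = (t * r * N / 2) * (4 * t * smax)"
      by (simp add: power2_eq_square)
    also have "\<dots> \<le> (t * r * N / 2) * \<delta>"
      using t rN by (intro mult_left_mono) (auto simp: mult.assoc)
    finally show ?thesis
      by (simp add: algebra_simps)
  qed
  finally show ?thesis
    by (simp add: q_def N_def)
qed

lemma sbm_scaled_density_deviation:
  fixes r smin smax \<delta> t :: real
  assumes p: "set_pmf p \<subseteq> {..<k}"
    and S: "\<And>a b. a < k \<Longrightarrow> b < k \<Longrightarrow> smin \<le> S a b \<and> S a b \<le> smax"
    and r: "0 < r" "r * smax \<le> 1" and smin: "0 \<le> smin"
    and N: "0 < n_pair n e a b"
    and t: "0 < t" "t \<le> 1/2" "4 * t * smax \<le> \<delta>"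
  shows "measure (sbm_pmf n p r S)
           {x. \<not> (smin - \<delta> < scaled_density n r (snd x) e a b \<and>
                   scaled_density n r (snd x) e a b < smax + \<delta>)}
         \<le> 2 * exp (- (t * \<delta> * r * real (n_pair n e a b)) / 2)"
proof (rule measure_sbm_pmf_le)
  fix z assume "\<And>i. i < n \<Longrightarrow> z i \<in> set_pmf p"
  then have "smin \<le> S (z i) (z j) \<and> S (z i) (z j) \<le> smax" if "i < n" "j < n" for i j
    using p S that by blast
  from edges_scaled_density_deviation[where S = S and z = z, OF this r smin N t]
  show "measure (Pi_pmf (upper_pairs n) False (\<lambda>x. bernoulli_pmf (r * S (z (fst x)) (z (snd x)))))
      {U. (z, sym_adj U) \<in> {x. \<not> (smin - \<delta> < scaled_density n r (snd x) e a b \<and>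
                                   scaled_density n r (snd x) e a b < smax + \<delta>)}}
      \<le> 2 * exp (- (t * \<delta> * r * real (n_pair n e a b)) / 2)"
    by simp
qed

section \<open>Union bound over balanced labellings and Borel-Cantelli\<close>

lemma n_pair_lower_bound:
  fixes \<alpha> :: real
  assumes a: "\<alpha> * real n \<le> real (n_cnt n e a)" and b: "\<alpha> * real n \<le> real (n_cnt n e b)"
    and two: "2 \<le> \<alpha> * real n"
  shows "(\<alpha> * real n)\<^sup>2 / 2 \<le> real (n_pair n e a b)"
proof (cases "a = b")
  case False
  have "(\<alpha> * real n)\<^sup>2 \<le> real (n_cnt n e a) * real (n_cnt n e b)"
    unfolding power2_eq_square using a b two by (intro mult_mono) auto
  moreover have "real (n_pair n e a b) = real (n_cnt n e a) * real (n_cnt n e b)"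
    using False by (simp add: n_pair_def)
  moreover have "0 \<le> real (n_cnt n e a) * real (n_cnt n e b)"
    by simp
  ultimately show ?thesis
    by linarith
next
  case True
  let ?m = "real (n_cnt n e a)"
  have "(\<alpha> * real n)\<^sup>2 / 2 \<le> ?m * (?m / 2)"
    unfolding power2_eq_square using a two by (simp add: mult_mono)
  also have "\<dots> \<le> ?m * (?m - 1)"
    using a two by (intro mult_left_mono) auto
  also have "\<dots> = real (n_pair n e a b)"
    using True a two by (simp add: n_pair_def of_nat_diff)
  finally show ?thesis .
qed

lemma n_cnt_restrict: "n_cnt n (restrict e {..<n}) a = n_cnt n e a"
  unfolding n_cnt_def by (rule arg_cong[where f = card]) auto

lemma scaled_density_restrict:
  "scaled_density n r A (restrict e {..<n}) a b = scaled_density n r A e a b"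
proof -
  have "o_cnt n A (restrict e {..<n}) a b = o_cnt n A e a b"
    unfolding o_cnt_def by (rule arg_cong[where f = card]) auto
  then show ?thesis
    by (simp add: scaled_density_def n_pair_def n_cnt_restrict)
qed

definition balanced_density_outside ::
    "nat \<Rightarrow> nat \<Rightarrow> real \<Rightarrow> real \<Rightarrow> real \<Rightarrow> real \<Rightarrow> (nat \<Rightarrow> nat \<Rightarrow> bool) \<Rightarrow> bool" where
  "balanced_density_outside n k \<alpha> r lo hi A \<longleftrightarrow>
     (\<exists>e. (\<forall>i<n. e i < k) \<and> (\<forall>c<k. \<alpha> * real n \<le> real (n_cnt n e c)) \<and>
          (\<exists>a<k. \<exists>b<k. \<not> (lo < scaled_density n r A e a b \<and> scaled_density n r A e a b < hi)))"

lemma power_mult_exp_neg_n_ln_plus_one: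
  fixes x :: real
  assumes "0 < x"
  shows "x ^ n * exp (- (real n * (ln x + 1))) = exp (- 1) ^ n"
proof -
  have "exp (- (real n * (ln x + 1))) = exp (real n * (- 1)) / exp (real n * ln x)"
    by (simp add: algebra_simps flip: exp_diff)
  also have "\<dots> = exp (- 1) ^ n / x ^ n"
    by (simp only: exp_of_nat_mult exp_ln[OF assms])
  finally show ?thesis
    using assms by simp
qed

lemma sbm_scaled_density_deviation_balanced:
  fixes r smin smax \<delta> t \<alpha> :: real
  assumes p: "set_pmf p \<subseteq> {..<k}"
    and S: "\<And>a b. a < k \<Longrightarrow> b < k \<Longrightarrow> smin \<le> S a b \<and> S a b \<le> smax"
    and r: "0 < r" "r * smax \<le> 1" and smin: "0 \<le> smin"
    and t: "0 < t" "t \<le> 1/2" "4 * t * smax \<le> \<delta>"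
    and ab: "a < k" "b < k"
    and balanced: "\<forall>c<k. \<alpha> * real n \<le> real (n_cnt n e c)" and two: "2 \<le> \<alpha> * real n"
    and nr: "4 * (ln (real k) + 1) \<le> \<alpha>\<^sup>2 * t * \<delta> * (real n * r)"
  shows "measure (sbm_pmf n p r S)
           {x. \<not> (smin - \<delta> < scaled_density n r (snd x) e a b \<and>
                   scaled_density n r (snd x) e a b < smax + \<delta>)}
         \<le> 2 * exp (- (real n * (ln (real k) + 1)))"
proof -
  have N: "(\<alpha> * real n)\<^sup>2 / 2 \<le> real (n_pair n e a b)"
    using balanced ab two by (intro n_pair_lower_bound) auto
  moreover have "0 < \<alpha> * real n"
    using two by linarith
  then have "0 < (\<alpha> * real n)\<^sup>2 / 2"
    using zero_less_power[of "\<alpha> * real n" 2] by linarith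
  ultimately have "0 < n_pair n e a b"
    by linarith
  then have "measure (sbm_pmf n p r S)
           {x. \<not> (smin - \<delta> < scaled_density n r (snd x) e a b \<and>
                   scaled_density n r (snd x) e a b < smax + \<delta>)}
         \<le> 2 * exp (- (t * \<delta> * r * real (n_pair n e a b)) / 2)"
    using sbm_scaled_density_deviation[OF p, of smin S smax, OF S r smin _ t] by blast
  also have "\<dots> \<le> 2 * exp (- (real n * (ln (real k) + 1)))"
  proof -
    have "0 \<le> smax"
      using S[OF ab(1) ab(1)] smin by linarith
    then have "0 \<le> \<delta>"
      using t mult_nonneg_nonneg[of "4 * t" smax] by linarith
    then have "0 \<le> t * \<delta> * r"
      using t r by simp
    with N have "t * \<delta> * r * ((\<alpha> * real n)\<^sup>2 / 2) \<le> t * \<delta> * r * real (n_pair n e a b)"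
      by (rule mult_left_mono)
    moreover have "real n * (4 * (ln (real k) + 1)) \<le> real n * (\<alpha>\<^sup>2 * t * \<delta> * (real n * r))"
      using nr by (rule mult_left_mono) simp
    ultimately show ?thesis
      by (simp add: power2_eq_square algebra_simps)
  qed
  finally show ?thesis .
qed

lemma sbm_scaled_densities_failure_le:
  fixes r smin smax \<delta> t \<alpha> :: real
  assumes p: "set_pmf p \<subseteq> {..<k}" and k: "0 < k"
    and S: "\<And>a b. a < k \<Longrightarrow> b < k \<Longrightarrow> smin \<le> S a b \<and> S a b \<le> smax"
    and r: "0 < r" "r * smax \<le> 1" and smin: "0 \<le> smin"
    and t: "0 < t" "t \<le> 1/2" "4 * t * smax \<le> \<delta>"
    and two: "2 \<le> \<alpha> * real n"
    and nr: "4 * (ln (real k) + 1) \<le> \<alpha>\<^sup>2 * t * \<delta> * (real n * r)"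
  shows "measure (sbm_pmf n p r S)
           {x. balanced_density_outside n k \<alpha> r (smin - \<delta>) (smax + \<delta>) (snd x)}
         \<le> 2 * (real k)\<^sup>2 * exp (- 1) ^ n"
    (is "measure ?M ?B \<le> _")
proof -
  define E where "E = {e \<in> {..<n} \<rightarrow>\<^sub>E {..<k}. \<forall>c<k. \<alpha> * real n \<le> real (n_cnt n e c)}"
  define I where "I = E \<times> {..<k} \<times> {..<k}"
  define bad where "bad = (\<lambda>(e, a, b). {x :: (nat \<Rightarrow> nat) \<times> (nat \<Rightarrow> nat \<Rightarrow> bool).
    \<not> (smin - \<delta> < scaled_density n r (snd x) e a b \<and> scaled_density n r (snd x) e a b < smax + \<delta>)})"
  have "card E \<le> card ({..<n} \<rightarrow>\<^sub>E {..<k})"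
    unfolding E_def by (intro card_mono finite_PiE) auto
  then have "card I \<le> k ^ n * k\<^sup>2"
    by (simp add: I_def card_cartesian_product card_PiE power2_eq_square)
  then have "real (card I) \<le> real k ^ n * (real k)\<^sup>2"
    by (metis of_nat_le_iff of_nat_mult of_nat_power)
  have "finite E"
    unfolding E_def by (rule finite_subset[of _ "{..<n} \<rightarrow>\<^sub>E {..<k}"]) (auto intro: finite_PiE)
  then have finite_I: "finite I"
    by (simp add: I_def)
  txt \<open>Labels outside {..<n} do not matter, so the finitely many labellings in E suffice.\<close>
  have "?B \<subseteq> (\<Union>i\<in>I. bad i)"
  proof
    fix x assume "x \<in> ?B"
    then obtain e a b where e: "\<forall>i<n. e i < k" "\<forall>c<k. \<alpha> * real n \<le> real (n_cnt n e c)"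
      and ab: "a < k" "b < k" and "x \<in> bad (e, a, b)"
      by (auto simp: bad_def balanced_density_outside_def)
    then have "restrict e {..<n} \<in> E" "x \<in> bad (restrict e {..<n}, a, b)"
      by (auto simp: E_def bad_def n_cnt_restrict scaled_density_restrict)
    with ab show "x \<in> (\<Union>i\<in>I. bad i)"
      unfolding I_def by blast
  qed
  then have "measure ?M ?B \<le> measure ?M (\<Union>i\<in>I. bad i)"
    by (intro measure_pmf.finite_measure_mono) auto
  also have "\<dots> \<le> (\<Sum>i\<in>I. measure ?M (bad i))"
    by (rule measure_pmf.finite_measure_subadditive_finite[OF finite_I]) simp
  also have "\<dots> \<le> real (card I) * (2 * exp (- (real n * (ln (real k) + 1))))"
  proof (rule sum_bounded_above)
    fix i assume "i \<in> I"
    then show "measure ?M (bad i) \<le> 2 * exp (- (real n * (ln (real k) + 1)))"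
      unfolding I_def E_def bad_def
      using sbm_scaled_density_deviation_balanced[OF p S r smin t _ _ _ two nr] by auto
  qed
  also have "\<dots> \<le> real k ^ n * (real k)\<^sup>2 * (2 * exp (- (real n * (ln (real k) + 1))))"
    using \<open>real (card I) \<le> _\<close> by (rule mult_right_mono) simp
  also have "\<dots> = 2 * (real k)\<^sup>2 * exp (- 1) ^ n"
    using power_mult_exp_neg_n_ln_plus_one[of "real k" n] k by simp
  finally show ?thesis .
qed

lemma s_min_s_max_bounds:
  assumes "0 < k" and "\<forall>a<k. \<forall>b<k. 0 < S a b"
  shows "0 < s_min k S"
    and "\<And>a b. a < k \<Longrightarrow> b < k \<Longrightarrow> s_min k S \<le> S a b \<and> S a b \<le> s_max k S"
proof -
  let ?T = "{S a b | a b. a < k \<and> b < k}"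
  have "?T = (\<lambda>(a, b). S a b) ` ({..<k} \<times> {..<k})"
    by auto
  then have "finite ?T"
    by simp
  moreover have "?T \<noteq> {}"
    using assms(1) by auto
  ultimately show "0 < s_min k S"
    using Min_in assms(2) unfolding s_min_def by fastforce
  show "s_min k S \<le> S a b \<and> S a b \<le> s_max k S" if "a < k" "b < k" for a b
    using that \<open>finite ?T\<close> unfolding s_min_def s_max_def by (auto intro: Min_le Max_ge)
qed

lemma eventually_sbm_scaled_densities_failure_le:
  fixes \<rho> :: "nat \<Rightarrow> real" and \<alpha> \<delta> :: real
  assumes p: "set_pmf p \<subseteq> {..<k}" and k: "0 < k" and S: "\<forall>a<k. \<forall>b<k. 0 < S a b"
    and \<rho>: "\<And>n. 0 < \<rho> n" "\<rho> \<longlonglongrightarrow> 0" "filterlim (\<lambda>n. real n * \<rho> n) at_top sequentially"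
    and \<alpha>: "0 < \<alpha>" and \<delta>: "0 < \<delta>"
  shows "eventually (\<lambda>n. measure (sbm_pmf n p (\<rho> n) S)
           {x. balanced_density_outside n k \<alpha> (\<rho> n) (s_min k S - \<delta>) (s_max k S + \<delta>) (snd x)}
         \<le> 2 * (real k)\<^sup>2 * exp (- 1) ^ n) sequentially"
proof -
  note bounds = s_min_s_max_bounds[OF k S]
  define smax where "smax = s_max k S"
  have smax: "0 < smax"
    using bounds(1) bounds(2)[OF k k] unfolding smax_def by linarith
  define t where "t = min (1/2) (\<delta> / (4 * smax))"
  have t: "0 < t" "t \<le> 1/2" "4 * t * smax \<le> \<delta>"
    using \<delta> smax by (auto simp: t_def min_def field_simps)
  have "eventually (\<lambda>n. \<rho> n < 1 / smax) sequentially"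
    using \<rho>(2) smax by (intro order_tendstoD) auto
  moreover have "eventually (\<lambda>n. 2 / \<alpha> \<le> real n) sequentially"
    using filterlim_real_sequentially unfolding filterlim_at_top by blast
  moreover have "eventually (\<lambda>n. 4 * (ln (real k) + 1) / (\<alpha>\<^sup>2 * t * \<delta>) \<le> real n * \<rho> n) sequentially"
    using \<rho>(3) unfolding filterlim_at_top by blast
  ultimately show ?thesis
  proof eventually_elim
    case (elim n)
    have "\<rho> n * smax \<le> 1" and "2 \<le> \<alpha> * real n"
      using elim(1,2) smax \<alpha> by (simp_all add: field_simps)
    moreover have "4 * (ln (real k) + 1) \<le> \<alpha>\<^sup>2 * t * \<delta> * (real n * \<rho> n)"
      using elim(3) \<alpha> t(1) \<delta> by (simp add: field_simps)
    ultimately show ?case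
      using sbm_scaled_densities_failure_le[where S = S and smin = "s_min k S" and smax = smax,
              OF p k _ \<rho>(1)] bounds less_imp_le t
      unfolding smax_def by blast
  qed
qed

lemma AE_eventually_notin_if_summable_distr:
  assumes "prob_space M" and X: "\<And>n. X n \<in> M \<rightarrow>\<^sub>M N n" and B: "\<And>n. B n \<in> sets (N n)"
    and summable: "summable (\<lambda>n. measure (distr M (N n) (X n)) (B n))"
  shows "AE \<omega> in M. eventually (\<lambda>n. X n \<omega> \<notin> B n) sequentially"
proof -
  interpret prob_space M by fact
  define A where "A n = X n -` B n \<inter> space M" for n
  have "A n \<in> sets M" for n
    unfolding A_def using X B by (rule measurable_sets)
  moreover have "measure M (A n) = measure (distr M (N n) (X n)) (B n)" for n
    unfolding A_def using X B by (simp add: measure_distr)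
  ultimately have "AE \<omega> in M. eventually (\<lambda>n. \<omega> \<in> space M - A n) sequentially"
    using summable by (intro borel_cantelli_AE1) (simp_all add: emeasure_eq_measure)
  then show ?thesis
    by (rule eventually_mono) (auto simp: A_def elim: eventually_mono)
qed

theorem corollary1:
  fixes M :: "'w measure"
    and k :: nat and p :: "nat pmf" and S :: "nat \<Rightarrow> nat \<Rightarrow> real" and \<rho> :: "nat \<Rightarrow> real"
    and X :: "nat \<Rightarrow> 'w \<Rightarrow> (nat \<Rightarrow> nat) \<times> (nat \<Rightarrow> nat \<Rightarrow> bool)"
    and \<alpha> \<delta> :: real
  assumes "prob_space M"
    and "k \<ge> 2"
    and "set_pmf p = {..<k}"
    and "\<forall>a<k. \<forall>b<k. S a b = S b a"
    and "\<forall>a<k. \<forall>b<k. S a b > 0"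
    and "\<forall>a<k. \<forall>b<k. a \<noteq> b \<longrightarrow> (\<exists>c<k. S c a \<noteq> S c b)"
    and "\<forall>n. \<rho> n > 0"
    and "\<rho> \<longlonglongrightarrow> 0"
    and "filterlim (\<lambda>n. real n * \<rho> n) at_top sequentially"
    and "\<And>n. X n \<in> M \<rightarrow>\<^sub>M measure_pmf (sbm_pmf n p (\<rho> n) S)"
    and "\<And>n. distr M (measure_pmf (sbm_pmf n p (\<rho> n) S)) (X n) = measure_pmf (sbm_pmf n p (\<rho> n) S)"
    and "\<alpha> > 0"
    and "0 < \<delta>" and "\<delta> < s_min k S / 2"
    and "eventually (\<lambda>n. real n * \<rho> n > 4 * s_max k S / (\<alpha>\<^sup>2 * \<delta>\<^sup>2)) sequentially"
  shows "AE \<omega> in M. eventually (\<lambda>n.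
           \<forall>e. (\<forall>i<n. e i < k) \<longrightarrow> (\<forall>a<k. real (n_cnt n e a) \<ge> \<alpha> * real n) \<longrightarrow>
             (\<forall>a<k. \<forall>b<k.
               s_min k S - \<delta> < real (o_cnt n (snd (X n \<omega>)) e a b) / (\<rho> n * real (n_pair n e a b)) \<and>
               real (o_cnt n (snd (X n \<omega>)) e a b) / (\<rho> n * real (n_pair n e a b)) < s_max k S + \<delta>))
         sequentially"
proof -
  let ?bad = "\<lambda>n. {x. balanced_density_outside n k \<alpha> (\<rho> n) (s_min k S - \<delta>) (s_max k S + \<delta>) (snd x)}"
  have "eventually (\<lambda>n. norm (measure (sbm_pmf n p (\<rho> n) S) (?bad n)) \<le> 2 * (real k)\<^sup>2 * exp (- 1) ^ n)
          sequentially"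
    using eventually_sbm_scaled_densities_failure_le[of p k S \<rho> \<alpha> \<delta>] assms(2,3,5,7-9,12,13) by simp
  then have "summable (\<lambda>n. measure (sbm_pmf n p (\<rho> n) S) (?bad n))"
    by (rule summable_comparison_test_ev) (intro summable_mult summable_geometric, simp)
  then have "AE \<omega> in M. eventually (\<lambda>n. X n \<omega> \<notin> ?bad n) sequentially"
    by (intro AE_eventually_notin_if_summable_distr[OF assms(1,10)]) (simp_all add: assms(11))
  then show ?thesis
    by (rule eventually_mono) (auto simp: balanced_density_outside_def scaled_density_def elim!: eventually_mono)
qed

end
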